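(* Let $d\geqslant 4$ be an even integer and let $r$ be an integer with $\gcd(d,r)=1$. Let $n>1$ be an integer with $n\equiv -r\pmod{d}$ and $n\geqslant \max\{r,d-r\}$. Then \[ \sum_{k=0}^{n-1}[2dk+r]\frac{(q^r;q^d)_k^d}{(q^d;q^d)_k^d}q^{\frac{d(d-r-2)k}{2}} \equiv 0\pmod{\Phi_n(q)^2}. \]
   Context: $q$ is an indeterminate. The $q$-shifted factorial is $(a;q)_k=(1-a)(1-aq)\cdots(1-aq^{k-1})$ (with $(a;q)_0=1$), for any Laurent monomial $a$ in $q$. For any integer $m$ (including negative $m$), $[m]=(1-q^m)/(1-q)$. $\Phi_n(q)$ denotes the $n$-th cyclotomic polynomial. A congruence of rational functions modulo a polynomial $P(q)$, where the denominators are coprime to $P(q)$, means that $P(q)$ divides the numerator of the difference in lowest terms. *)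

theory Defs
  imports "HOL-Computational_Algebra.Computational_Algebra" "HOL-Number_Theory.Cong" Complex_Main
begin

type_synonym ratfun = "complex poly fract"

definition qv :: ratfun where
  "qv = Fract [:0, 1:] 1"

definition qpoch :: "'a::comm_ring_1 \<Rightarrow> 'a \<Rightarrow> nat \<Rightarrow> 'a" where
  "qpoch a b k = (\<Prod>j<k. (1 - a * b ^ j))"

definition qint :: "int \<Rightarrow> ratfun" where
  "qint m = (1 - qv powi m) / (1 - qv)"

definition cyclo :: "nat \<Rightarrow> complex poly" where
  "cyclo n = (\<Prod>k\<in>{k. 1 \<le> k \<and> k \<le> n \<and> coprime k n}.
               [:- cis (2 * pi * real k / real n), 1:])"

text \<open>Congruence of rational functions modulo a polynomial P: the difference can be written
  as A/B with B coprime to P and P dividing A (equivalently, P divides the numerator in lowest terms).\<close>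
definition fcong :: "ratfun \<Rightarrow> ratfun \<Rightarrow> complex poly \<Rightarrow> bool" where
  "fcong S T P \<longleftrightarrow> (\<exists>A B. B \<noteq> 0 \<and> coprime B P \<and> P dvd A \<and> S - T = Fract A B)"

end

theory Submission
  imports Defs "HOL-Library.Real_Mod"
begin

text \<open>Work in base \<open>q\<^sup>d\<close> with \<open>a = q\<^sup>r\<close>. Put \<open>d m = n + r\<close>, \<open>N = n - m\<close> and
  \<open>c = d N + r = (d - 1) n\<close>. Applying the Bailey lemma \<open>d/2 - 1\<close> times to the unit Bailey pair,
  first with \<open>\<rho>\<^sub>1 = q\<^sup>r\<^sup>+\<^sup>c, \<rho>\<^sub>2 = q\<^sup>r\<close> and then with \<open>\<rho>\<^sub>1 = \<rho>\<^sub>2 = q\<^sup>r\<close>, gives a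
  terminating identity whose \<open>k\<close>-th term agrees with the \<open>k\<close>-th summand modulo \<open>\<Phi>\<^sub>n(q)\<^sup>2\<close>
  for \<open>k \<le> N\<close>, because \<open>(q\<^sup>u; q\<^sup>d)\<^sub>k\<^sup>2 \<equiv> (q\<^sup>u\<^sup>+\<^sup>c; q\<^sup>d)\<^sub>k (q\<^sup>u\<^sup>-\<^sup>c; q\<^sup>d)\<^sub>k\<close> when
  \<open>n | c\<close>. The Bailey side is \<open>[r] (q\<^sup>d; q\<^sup>d)\<^sub>N (q\<^sup>r\<^sup>+\<^sup>d; q\<^sup>d)\<^sub>N \<beta>\<^sub>N\<close>: the second
  factor contains \<open>1 - q\<^sup>c\<close>, and \<open>\<beta>\<^sub>N\<close> is divisible by \<open>\<Phi>\<^sub>n\<close> since every Bailey step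
  shifts the range where \<open>\<beta>\<close> vanishes modulo \<open>\<Phi>\<^sub>n\<close> by \<open>m - 1\<close>. The summands with
  \<open>N < k < n\<close> contain \<open>(1 - q\<^sup>c)\<^sup>d\<close>. Congruences are handled in the localisation of
  \<open>\<complex>[q]\<close> at \<open>\<Phi>\<^sub>n\<close>.\<close>

section \<open>\<open>q\<close>-shifted factorials\<close>

lemma qpoch_0 [simp]: "qpoch a q 0 = 1"
  unfolding qpoch_def by simp

lemma qpoch_Suc: "qpoch a q (Suc k) = qpoch a q k * (1 - a * q ^ k)"
  unfolding qpoch_def by simp

lemma qpoch_add: "qpoch a q (m + k) = qpoch a q m * qpoch (a * q ^ m) q k"
  by (induction k) (simp_all add: qpoch_Suc power_add mult.assoc)

lemma qpoch_Suc_left: "qpoch a q (Suc k) = (1 - a) * qpoch (a * q) q k"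
  using qpoch_add[of a q 1 k] by (simp add: qpoch_Suc)

lemma qpoch_nonzero:
  fixes a q :: "'a::idom"
  shows "(\<And>j. j < k \<Longrightarrow> 1 - a * q ^ j \<noteq> 0) \<Longrightarrow> qpoch a q k \<noteq> 0"
  unfolding qpoch_def by (simp add: prod_zero_iff)

lemma qpoch_self_nonzero:
  fixes q :: "'a::idom"
  shows "(\<And>i. 1 - q ^ Suc i \<noteq> 0) \<Longrightarrow> qpoch q q m \<noteq> 0"
  by (intro qpoch_nonzero) simp

lemma qpoch_inverse_power:
  fixes q :: "'a::field"
  assumes "q \<noteq> 0" "k \<le> N"
  shows "qpoch (inverse (q ^ N)) q k * q ^ (N * k) * qpoch q q (N - k)
    = (-1) ^ k * q ^ (k * (k - 1) div 2) * qpoch q q N"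
  using assms(2)
proof (induction k)
  case (Suc k)
  have N: "N - k = Suc (N - Suc k)" using Suc.prems by simp
  have factor: "(1 - inverse (q ^ N) * q ^ k) * q ^ N = - (q ^ k) * (1 - q * q ^ (N - Suc k))"
    using assms(1) Suc.prems by (simp add: algebra_simps flip: power_add power_Suc)
  have "qpoch (inverse (q ^ N)) q (Suc k) * q ^ (N * Suc k) * qpoch q q (N - Suc k)
      = qpoch (inverse (q ^ N)) q k * q ^ (N * k) * qpoch q q (N - Suc k)
        * ((1 - inverse (q ^ N) * q ^ k) * q ^ N)"
    by (simp add: qpoch_Suc power_add mult_ac)
  also have "\<dots> = - (q ^ k) * (qpoch (inverse (q ^ N)) q k * q ^ (N * k) * qpoch q q (N - k))"
    unfolding factor N by (simp add: qpoch_Suc mult_ac)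
  also have "\<dots> = (-1) ^ Suc k * q ^ (Suc k * (Suc k - 1) div 2) * qpoch q q N"
  proof -
    have "Suc k * (Suc k - 1) div 2 = k * (k - 1) div 2 + k" by (cases k) (simp_all add: algebra_simps)
    then show ?thesis using Suc by (simp add: power_add)
  qed
  finally show ?case .
qed simp

section \<open>The \<open>q\<close>-Pfaff--Saalschuetz summation\<close>

definition saalschuetz_term :: "'a::field \<Rightarrow> 'a \<Rightarrow> 'a \<Rightarrow> 'a \<Rightarrow> nat \<Rightarrow> nat \<Rightarrow> 'a" where
  "saalschuetz_term q x y z M i = qpoch x q i * qpoch y q i * qpoch z q (M - i) * z ^ i /
     (qpoch q q i * qpoch q q (M - i) * qpoch (x * y * z) q i)"

context
  fixes q x y z :: "'a::field"
  assumes q_pow_neq_1: "\<And>i. 1 - q ^ Suc i \<noteq> 0"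
    and xyz_pow_neq_1: "\<And>i. 1 - x * y * z * q ^ i \<noteq> 0"
begin

private abbreviation (input) "t \<equiv> saalschuetz_term q x y z"

text \<open>Induction on \<open>M\<close>: with \<open>ratio M\<close> the quotient of the right-hand sides at \<open>M + 1\<close> and \<open>M\<close>,
  the difference \<open>t (M + 1) i - ratio M * t M i\<close> telescopes as
  \<open>certificate M i - certificate M (i - 1)\<close>.\<close>

private definition ratio :: "nat \<Rightarrow> 'a" where
  "ratio M = (1 - y * z * q ^ M) * (1 - x * z * q ^ M) / ((1 - q * q ^ M) * (1 - x * y * z * q ^ M))"

private definition certificate :: "nat \<Rightarrow> nat \<Rightarrow> 'a" where
  "certificate M i = - z * q ^ (M - i) * t M i * (1 - x * q ^ i) * (1 - y * q ^ i)
     / ((1 - q * q ^ M) * (1 - x * y * z * q ^ M))"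

private lemma qpoch_xyz_nonzero: "qpoch (x * y * z) q m \<noteq> 0"
  using xyz_pow_neq_1 by (intro qpoch_nonzero) simp

private lemma telescope_0: "t (Suc M) 0 - ratio M * t M 0 = certificate M 0"
proof -
  define X where "X = q ^ M"
  define s where "s = qpoch z q M / qpoch q q M"
  define Q where "Q = 1 - q * X"
  define E where "E = 1 - x * y * z * X"
  have QE: "Q \<noteq> 0" "E \<noteq> 0"
    unfolding Q_def E_def X_def using q_pow_neq_1[of M] xyz_pow_neq_1[of M] by simp_all
  have t1: "t (Suc M) 0 = s * (1 - z * X) / Q"
    unfolding saalschuetz_term_def s_def Q_def X_def
    using qpoch_self_nonzero[OF q_pow_neq_1, of M] QE(1) by (simp add: qpoch_Suc field_simps Q_def X_def)
  have t0: "t M 0 = s" unfolding saalschuetz_term_def s_def by simp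
  have r: "ratio M = (1 - y * z * X) * (1 - x * z * X) / (Q * E)"
    unfolding ratio_def Q_def E_def X_def ..
  have c: "certificate M 0 = - z * X * s * (1 - x) * (1 - y) / (Q * E)"
    unfolding certificate_def Q_def E_def X_def t0 by simp
  show ?thesis
    unfolding t1 t0 r c using QE by (simp add: field_simps) (simp add: E_def algebra_simps)
qed

private lemma telescope_Suc:
  assumes "k < M"
  shows "t (Suc M) (Suc k) - ratio M * t M (Suc k) = certificate M (Suc k) - certificate M k"
proof -
  define j where "j = M - Suc k"
  have M: "M = Suc (k + j)" using assms unfolding j_def by simp
  define B where "B = qpoch x q k * qpoch y q k * qpoch z q j * z ^ k /
    (qpoch q q k * qpoch q q j * qpoch (x * y * z) q k)"
  define X1 where "X1 = (1 - x * q ^ k) * (1 - y * q ^ k)"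
  define D1 where "D1 = (1 - q * q ^ k) * (1 - x * y * z * q ^ k)"
  define Qj where "Qj = 1 - q * q ^ j"
  define Zj where "Zj = 1 - z * q ^ j"
  define Q where "Q = 1 - q * q ^ M"
  define E where "E = 1 - x * y * z * q ^ M"
  have nonzero: "D1 \<noteq> 0" "Qj \<noteq> 0" "Q \<noteq> 0" "E \<noteq> 0"
    unfolding D1_def Qj_def Q_def E_def
    using q_pow_neq_1 xyz_pow_neq_1 by (simp_all add: mult.commute)
  have t1: "t (Suc M) (Suc k) = B * X1 * z * Zj / (D1 * Qj)"
    unfolding saalschuetz_term_def B_def X1_def D1_def Qj_def Zj_def M
    using qpoch_self_nonzero[OF q_pow_neq_1] qpoch_xyz_nonzero nonzero(1,2)
    by (simp add: qpoch_Suc Suc_diff_le field_simps D1_def Qj_def)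
  have t2: "t M (Suc k) = B * X1 * z / D1"
    unfolding saalschuetz_term_def B_def X1_def D1_def M
    using qpoch_self_nonzero[OF q_pow_neq_1] qpoch_xyz_nonzero nonzero(1)
    by (simp add: qpoch_Suc field_simps D1_def)
  have t3: "t M k = B * Zj / Qj"
    unfolding saalschuetz_term_def B_def Qj_def Zj_def M
    using qpoch_self_nonzero[OF q_pow_neq_1] qpoch_xyz_nonzero nonzero(2)
    by (simp add: qpoch_Suc Suc_diff_le field_simps Qj_def)
  have r: "ratio M = (1 - y * z * q ^ M) * (1 - x * z * q ^ M) / (Q * E)"
    unfolding ratio_def Q_def E_def ..
  have c1: "certificate M (Suc k) = - z * q ^ j * (B * X1 * z / D1)
      * (1 - x * q * q ^ k) * (1 - y * q * q ^ k) / (Q * E)"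
    unfolding certificate_def t2 Q_def E_def by (simp add: M mult.assoc)
  have c0: "certificate M k = - z * q * q ^ j * (B * Zj / Qj) * X1 / (Q * E)"
    unfolding certificate_def t3 Q_def E_def X1_def by (simp add: M mult.assoc)
  show ?thesis
    unfolding t1 t2 r c1 c0 using nonzero
    by (simp add: field_simps) (simp add: X1_def D1_def Qj_def Zj_def Q_def E_def M power_add algebra_simps)
qed

private lemma telescope_top: "t (Suc M) (Suc M) = - certificate M M"
proof -
  define Q where "Q = 1 - q * q ^ M"
  define E where "E = 1 - x * y * z * q ^ M"
  have "Q \<noteq> 0" "E \<noteq> 0"
    unfolding Q_def E_def using q_pow_neq_1 xyz_pow_neq_1 by (simp_all add: mult.commute)
  then have "t (Suc M) (Suc M) = t M M * (1 - x * q ^ M) * (1 - y * q ^ M) * z / (Q * E)"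
    unfolding saalschuetz_term_def Q_def E_def
    using qpoch_self_nonzero[OF q_pow_neq_1] qpoch_xyz_nonzero by (simp add: qpoch_Suc field_simps)
  then show ?thesis unfolding certificate_def Q_def E_def by simp
qed

theorem q_pfaff_saalschuetz:
  "(\<Sum>i\<le>M. saalschuetz_term q x y z M i)
     = qpoch (y * z) q M * qpoch (x * z) q M / (qpoch q q M * qpoch (x * y * z) q M)"
proof (induction M)
  case (Suc M)
  define h where "h i = (if i = 0 then 0 else certificate M (i - 1))" for i
  have "t (Suc M) i = ratio M * t M i + (h (Suc i) - h i)" if "i \<le> M" for i
    using that telescope_0[of M] telescope_Suc[of _ M] unfolding h_def
    by (cases i) (auto simp: algebra_simps)
  then have "(\<Sum>i\<le>M. t (Suc M) i) = ratio M * (\<Sum>i\<le>M. t M i) + (h (Suc M) - h 0)"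
    by (simp add: sum.distrib sum_distrib_left atMost_atLeast0 sum_Suc_diff)
  then have "(\<Sum>i\<le>Suc M. t (Suc M) i) = ratio M * (\<Sum>i\<le>M. t M i)"
    using telescope_top[of M] by (simp add: h_def)
  also have "\<dots> = qpoch (y * z) q (Suc M) * qpoch (x * z) q (Suc M)
      / (qpoch q q (Suc M) * qpoch (x * y * z) q (Suc M))"
    unfolding Suc.IH ratio_def using qpoch_self_nonzero[OF q_pow_neq_1, of M] qpoch_xyz_nonzero[of M]
      q_pow_neq_1[of M] xyz_pow_neq_1[of M]
    by (simp add: qpoch_Suc field_simps)
  finally show ?case .
qed (simp add: saalschuetz_term_def)

end

section \<open>Bailey pairs and the Bailey lemma\<close>

definition bailey_pair :: "'a::field \<Rightarrow> 'a \<Rightarrow> (nat \<Rightarrow> 'a) \<Rightarrow> (nat \<Rightarrow> 'a) \<Rightarrow> bool" where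
  "bailey_pair a q \<alpha> \<beta> \<longleftrightarrow>
     (\<forall>n. \<beta> n = (\<Sum>k\<le>n. \<alpha> k / (qpoch q q (n - k) * qpoch (a * q) q (n + k))))"

text \<open>In the usual notation for the Bailey lemma, \<open>l = a q / (\<rho>\<^sub>1 \<rho>\<^sub>2)\<close>.\<close>

definition bailey_alpha :: "'a::field \<Rightarrow> 'a \<Rightarrow> 'a \<Rightarrow> 'a \<Rightarrow> (nat \<Rightarrow> 'a) \<Rightarrow> nat \<Rightarrow> 'a" where
  "bailey_alpha q \<rho>\<^sub>1 \<rho>\<^sub>2 l \<alpha> k =
     qpoch \<rho>\<^sub>1 q k * qpoch \<rho>\<^sub>2 q k * l ^ k / (qpoch (\<rho>\<^sub>2 * l) q k * qpoch (\<rho>\<^sub>1 * l) q k) * \<alpha> k"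

definition bailey_beta :: "'a::field \<Rightarrow> 'a \<Rightarrow> 'a \<Rightarrow> 'a \<Rightarrow> (nat \<Rightarrow> 'a) \<Rightarrow> nat \<Rightarrow> 'a" where
  "bailey_beta q \<rho>\<^sub>1 \<rho>\<^sub>2 l \<beta> n = (\<Sum>j\<le>n. qpoch \<rho>\<^sub>1 q j * qpoch \<rho>\<^sub>2 q j * qpoch l q (n - j) * l ^ j /
     (qpoch q q (n - j) * qpoch (\<rho>\<^sub>2 * l) q n * qpoch (\<rho>\<^sub>1 * l) q n) * \<beta> j)"

lemma funpow_bailey_alpha:
  "(bailey_alpha q \<rho>\<^sub>1 \<rho>\<^sub>2 l ^^ m) \<alpha> k =
     (qpoch \<rho>\<^sub>1 q k * qpoch \<rho>\<^sub>2 q k * l ^ k / (qpoch (\<rho>\<^sub>2 * l) q k * qpoch (\<rho>\<^sub>1 * l) q k)) ^ m * \<alpha> k"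
  by (induction m) (simp_all add: bailey_alpha_def)

lemma sum_atMost_triangle_swap:
  fixes n :: nat
  shows "(\<Sum>j\<le>n. \<Sum>k\<le>j. f j k) = (\<Sum>k\<le>n. \<Sum>j=k..n. f j k)"
proof -
  have "(\<Sum>j\<le>n. \<Sum>k\<le>j. f j k) = (\<Sum>j\<le>n. \<Sum>k\<in>{k\<in>{..n}. k \<le> j}. f j k)"
    by (intro sum.cong) auto
  also have "\<dots> = (\<Sum>k\<le>n. \<Sum>j\<in>{j\<in>{..n}. k \<le> j}. f j k)"
    by (rule sum.swap_restrict) simp_all
  also have "\<dots> = (\<Sum>k\<le>n. \<Sum>j=k..n. f j k)"
    by (intro sum.cong) auto
  finally show ?thesis .
qed

context
  fixes a q \<rho>\<^sub>1 \<rho>\<^sub>2 l :: "'a::field"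
  assumes aq_eq: "a * q = \<rho>\<^sub>1 * \<rho>\<^sub>2 * l"
    and q_pow_neq_1: "\<And>i. 1 - q ^ Suc i \<noteq> 0"
    and aq_pow_neq_1: "\<And>i. 1 - a * q * q ^ i \<noteq> 0"
    and \<rho>\<^sub>2l_pow_neq_1: "\<And>i. 1 - \<rho>\<^sub>2 * l * q ^ i \<noteq> 0"
    and \<rho>\<^sub>1l_pow_neq_1: "\<And>i. 1 - \<rho>\<^sub>1 * l * q ^ i \<noteq> 0"
begin

lemma bailey_kernel_sum:
  assumes "r \<le> n"
  shows "(\<Sum>j=r..n. qpoch \<rho>\<^sub>1 q j * qpoch \<rho>\<^sub>2 q j * qpoch l q (n - j) * l ^ j /
            (qpoch q q (n - j) * qpoch q q (j - r) * qpoch (a * q) q (j + r)))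
       = qpoch \<rho>\<^sub>1 q r * qpoch \<rho>\<^sub>2 q r * l ^ r * qpoch (\<rho>\<^sub>2 * l) q n * qpoch (\<rho>\<^sub>1 * l) q n /
            (qpoch (\<rho>\<^sub>2 * l) q r * qpoch (\<rho>\<^sub>1 * l) q r * qpoch q q (n - r) * qpoch (a * q) q (n + r))"
proof -
  define M where "M = n - r"
  have n: "n = r + M" using assms unfolding M_def by simp
  define x where "x = \<rho>\<^sub>1 * q ^ r"
  define y where "y = \<rho>\<^sub>2 * q ^ r"
  have xyl: "x * y * l = a * q * q ^ (r + r)"
    unfolding x_def y_def aq_eq by (simp add: power_add algebra_simps)
  have nonzero: "qpoch q q m \<noteq> 0" "qpoch (a * q) q m \<noteq> 0" "qpoch (\<rho>\<^sub>2 * l) q m \<noteq> 0"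
      "qpoch (\<rho>\<^sub>1 * l) q m \<noteq> 0" "qpoch (x * y * l) q m \<noteq> 0" for m
    unfolding xyl using q_pow_neq_1 aq_pow_neq_1 \<rho>\<^sub>2l_pow_neq_1 \<rho>\<^sub>1l_pow_neq_1
    by (auto intro!: qpoch_nonzero simp: mult.commute mult.left_commute simp flip: power_add power_Suc)
  define C where "C = qpoch \<rho>\<^sub>1 q r * qpoch \<rho>\<^sub>2 q r * l ^ r / qpoch (a * q) q (r + r)"
  have "(\<Sum>j=r..n. qpoch \<rho>\<^sub>1 q j * qpoch \<rho>\<^sub>2 q j * qpoch l q (n - j) * l ^ j /
            (qpoch q q (n - j) * qpoch q q (j - r) * qpoch (a * q) q (j + r)))
      = (\<Sum>i=0..M. qpoch \<rho>\<^sub>1 q (r + i) * qpoch \<rho>\<^sub>2 q (r + i) * qpoch l q (M - i) * l ^ (r + i) /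
            (qpoch q q (M - i) * qpoch q q i * qpoch (a * q) q (r + r + i)))"
    unfolding n by (rule sum.reindex_bij_witness[of _ "\<lambda>i. r + i" "\<lambda>j. j - r"]) (auto simp: algebra_simps)
  also have "\<dots> = (\<Sum>i\<le>M. C * saalschuetz_term q x y l M i)"
    unfolding atMost_atLeast0 qpoch_add C_def saalschuetz_term_def xyl[symmetric] x_def y_def
    using nonzero by (intro sum.cong refl) (simp add: power_add field_simps)
  also have "\<dots> = C * (qpoch (y * l) q M * qpoch (x * l) q M / (qpoch q q M * qpoch (x * y * l) q M))"
  proof -
    have "1 - x * y * l * q ^ i \<noteq> 0" for i
      using aq_pow_neq_1[of "r + r + i"] unfolding xyl by (simp add: power_add mult.assoc)
    then show ?thesis using q_pfaff_saalschuetz[OF q_pow_neq_1] by (simp add: sum_distrib_left[symmetric])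
  qed
  also have "\<dots> = qpoch \<rho>\<^sub>1 q r * qpoch \<rho>\<^sub>2 q r * l ^ r * qpoch (\<rho>\<^sub>2 * l) q n * qpoch (\<rho>\<^sub>1 * l) q n /
            (qpoch (\<rho>\<^sub>2 * l) q r * qpoch (\<rho>\<^sub>1 * l) q r * qpoch q q (n - r) * qpoch (a * q) q (n + r))"
  proof -
    have "qpoch (\<rho>\<^sub>2 * l) q n = qpoch (\<rho>\<^sub>2 * l) q r * qpoch (y * l) q M"
      "qpoch (\<rho>\<^sub>1 * l) q n = qpoch (\<rho>\<^sub>1 * l) q r * qpoch (x * l) q M"
      unfolding n x_def y_def qpoch_add by (simp_all add: algebra_simps)
    moreover have "qpoch (a * q) q (n + r) = qpoch (a * q) q (r + r) * qpoch (x * y * l) q M"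
      unfolding n xyl qpoch_add[symmetric] by (simp add: algebra_simps)
    ultimately show ?thesis unfolding C_def using nonzero by (simp add: n field_simps)
  qed
  finally show ?thesis .
qed

lemma bailey_lemma:
  assumes "bailey_pair a q \<alpha> \<beta>"
  shows "bailey_pair a q (bailey_alpha q \<rho>\<^sub>1 \<rho>\<^sub>2 l \<alpha>) (bailey_beta q \<rho>\<^sub>1 \<rho>\<^sub>2 l \<beta>)"
  unfolding bailey_pair_def
proof
  fix n
  define K where "K = qpoch (\<rho>\<^sub>2 * l) q n * qpoch (\<rho>\<^sub>1 * l) q n"
  define c where "c j = qpoch \<rho>\<^sub>1 q j * qpoch \<rho>\<^sub>2 q j * qpoch l q (n - j) * l ^ j" for j
  have "K \<noteq> 0"
    unfolding K_def using \<rho>\<^sub>1l_pow_neq_1 \<rho>\<^sub>2l_pow_neq_1 by (simp add: qpoch_nonzero)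
  have "bailey_beta q \<rho>\<^sub>1 \<rho>\<^sub>2 l \<beta> n
      = (\<Sum>j\<le>n. \<Sum>k\<le>j. c j / (qpoch q q (n - j) * K) * (\<alpha> k / (qpoch q q (j - k) * qpoch (a * q) q (j + k))))"
    using assms unfolding bailey_beta_def bailey_pair_def c_def K_def
    by (simp add: sum_distrib_left mult.assoc)
  also have "\<dots> = (\<Sum>k\<le>n. \<alpha> k / K *
      (\<Sum>j=k..n. c j / (qpoch q q (n - j) * qpoch q q (j - k) * qpoch (a * q) q (j + k))))"
    unfolding sum_atMost_triangle_swap
    by (intro sum.cong refl) (simp add: sum_distrib_left mult_ac)
  also have "\<dots> = (\<Sum>k\<le>n. bailey_alpha q \<rho>\<^sub>1 \<rho>\<^sub>2 l \<alpha> k / (qpoch q q (n - k) * qpoch (a * q) q (n + k)))"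
  proof (intro sum.cong refl)
    fix k assume "k \<in> {..n}"
    then have "k \<le> n" by simp
    then show "\<alpha> k / K * (\<Sum>j=k..n. c j / (qpoch q q (n - j) * qpoch q q (j - k) * qpoch (a * q) q (j + k)))
        = bailey_alpha q \<rho>\<^sub>1 \<rho>\<^sub>2 l \<alpha> k / (qpoch q q (n - k) * qpoch (a * q) q (n + k))"
      unfolding c_def bailey_alpha_def bailey_kernel_sum[OF \<open>k \<le> n\<close>] using \<open>K \<noteq> 0\<close>
      by (simp add: K_def field_simps)
  qed
  finally show "bailey_beta q \<rho>\<^sub>1 \<rho>\<^sub>2 l \<beta> n
      = (\<Sum>k\<le>n. bailey_alpha q \<rho>\<^sub>1 \<rho>\<^sub>2 l \<alpha> k / (qpoch q q (n - k) * qpoch (a * q) q (n + k)))" .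
qed

end

section \<open>The unit Bailey pair\<close>

definition unit_alpha :: "'a::field \<Rightarrow> 'a \<Rightarrow> nat \<Rightarrow> 'a" where
  "unit_alpha a q k = (1 - a * q ^ (2 * k)) * qpoch a q k / ((1 - a) * qpoch q q k)
     * (-1) ^ k * q ^ (k * (k - 1) div 2)"

lemma triangular_Suc: "Suc k * Suc (Suc k) div 2 = k * Suc k div 2 + Suc k"
proof -
  have "Suc k * Suc (Suc k) = k * Suc k + 2 * Suc k" by simp
  then show ?thesis by simp
qed

context
  fixes a q :: "'a::field"
  assumes q_pow_neq_1: "\<And>i. 1 - q ^ Suc i \<noteq> 0"
    and aq_pow_neq_1: "\<And>i. 1 - a * q * q ^ i \<noteq> 0"
    and a_neq_1: "1 - a \<noteq> 0"
begin

private abbreviation (input) "pair_term n r \<equiv> unit_alpha a q r / (qpoch q q (n - r) * qpoch (a * q) q (n + r))"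

private definition partial_sum :: "nat \<Rightarrow> nat \<Rightarrow> 'a" where
  "partial_sum n k = (-1) ^ k * q ^ (k * Suc k div 2) * qpoch (a * q) q k
     / (qpoch q q k * qpoch q q (n - Suc k) * qpoch (a * q) q (n + k) * (1 - q ^ n))"

private lemma qpoch_aq_nonzero: "qpoch (a * q) q m \<noteq> 0"
  using aq_pow_neq_1 by (intro qpoch_nonzero) (simp add: mult.assoc)

private lemma unit_alpha_Suc:
  "unit_alpha a q (Suc k) = - (1 - a * (q * q ^ k) * (q * q ^ k))
     * ((-1) ^ k * q ^ (k * Suc k div 2) * qpoch (a * q) q k) / (qpoch q q k * (1 - q * q ^ k))"
proof -
  define D where "D = 1 - q * q ^ k"
  have "D \<noteq> 0" unfolding D_def using q_pow_neq_1[of k] by simp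
  have p: "q ^ (2 * Suc k) = (q * q ^ k) * (q * q ^ k)" by (simp add: mult_2 power_add)
  have e: "Suc k * (Suc k - 1) div 2 = k * Suc k div 2" by (simp add: mult.commute)
  show ?thesis
    unfolding unit_alpha_def p e qpoch_Suc_left[of a] qpoch_Suc[of q q k] D_def[symmetric]
    using a_neq_1 \<open>D \<noteq> 0\<close> qpoch_self_nonzero[OF q_pow_neq_1, of k] by (simp add: field_simps)
qed

private lemma partial_sum_eq:
  assumes "k < n"
  shows "(\<Sum>r\<le>k. pair_term n r) = partial_sum n k"
  using assms
proof (induction k)
  case 0
  then obtain m where n: "n = Suc m" by (cases n) auto
  then show ?case
    unfolding partial_sum_def unit_alpha_def using a_neq_1 by (simp add: qpoch_Suc)
next
  case (Suc k)
  define s where "s = n - Suc (Suc k)"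
  have n: "n = Suc (Suc (k + s))" unfolding s_def using Suc.prems by simp
  define G where "G = (-1) ^ k * q ^ (k * Suc k div 2) * qpoch (a * q) q k"
  define Q where "Q = q * q ^ k"
  define S where "S = q * q ^ s"
  define D1 where "D1 = 1 - Q"
  define D2 where "D2 = 1 - S"
  define D3 where "D3 = 1 - a * Q * Q * S"
  define D4 where "D4 = 1 - Q * S"
  have qn: "q ^ n = Q * S" "a * q * q ^ (n + k) = a * Q * Q * S"
    unfolding n Q_def S_def by (simp_all add: power_add algebra_simps)
  have nonzero12: "D1 \<noteq> 0" "D2 \<noteq> 0"
    unfolding D1_def D2_def Q_def S_def using q_pow_neq_1 by simp_all
  have nonzero3: "D3 \<noteq> 0" unfolding D3_def qn(2)[symmetric] by (rule aq_pow_neq_1)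
  have nonzero4: "D4 \<noteq> 0" unfolding D4_def qn(1)[symmetric] n by (rule q_pow_neq_1)
  have "n - Suc k = Suc s" "n - Suc (Suc k) = s" "n + Suc k = Suc (n + k)" unfolding n by simp_all
  then have e1: "partial_sum n k = G / (qpoch q q k * (qpoch q q s * D2) * qpoch (a * q) q (n + k) * D4)"
    and e2: "pair_term n (Suc k) = (- (1 - a * Q * Q) * G / (qpoch q q k * D1))
      / (qpoch q q s * D2 * (qpoch (a * q) q (n + k) * D3))"
    unfolding partial_sum_def unit_alpha_Suc G_def D1_def D2_def D3_def D4_def qn[symmetric]
    by (simp_all add: qpoch_Suc Q_def S_def mult_ac)
  have e3: "partial_sum n (Suc k) = - G * Q * (1 - a * Q)
      / (qpoch q q k * D1 * qpoch q q s * (qpoch (a * q) q (n + k) * D3) * D4)"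
    unfolding partial_sum_def triangular_Suc G_def D1_def D3_def D4_def qn[symmetric]
    using \<open>n - Suc (Suc k) = s\<close> \<open>n + Suc k = Suc (n + k)\<close>
    by (simp add: qpoch_Suc Q_def power_add mult_ac)
  have "(\<Sum>r\<le>Suc k. pair_term n r) = partial_sum n k + pair_term n (Suc k)" using Suc by simp
  also have "\<dots> = partial_sum n (Suc k)"
    unfolding e1 e2 e3 using nonzero12 nonzero3 nonzero4 qpoch_self_nonzero[OF q_pow_neq_1] qpoch_aq_nonzero
    by (simp add: field_simps) (simp add: D1_def D2_def D3_def D4_def algebra_simps)
  finally show ?case .
qed

theorem unit_bailey_pair: "bailey_pair a q (unit_alpha a q) (\<lambda>n. if n = 0 then 1 else 0)"
  unfolding bailey_pair_def
proof
  fix n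
  show "(if n = 0 then 1 else 0) = (\<Sum>k\<le>n. pair_term n k)"
  proof (cases n)
    case 0
    then show ?thesis using a_neq_1 by (simp add: unit_alpha_def)
  next
    case (Suc m)
    define G where "G = (-1) ^ m * q ^ (m * Suc m div 2) * qpoch (a * q) q m"
    define Q where "Q = q * q ^ m"
    define D where "D = 1 - Q"
    define E where "E = 1 - a * Q * Q"
    have "D \<noteq> 0" unfolding D_def Q_def using q_pow_neq_1[of m] by simp
    have "E \<noteq> 0"
      unfolding E_def Q_def using aq_pow_neq_1[of "Suc m + m"] by (simp add: power_add algebra_simps)
    have A: "qpoch (a * q) q (Suc m + Suc m) = qpoch (a * q) q (Suc m + m) * E"
      unfolding E_def Q_def by (simp add: qpoch_Suc power_add algebra_simps)
    have "pair_term n n = - G / (qpoch q q m * qpoch (a * q) q (n + m) * D)"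
      unfolding Suc diff_self qpoch_0 A unfolding unit_alpha_Suc G_def Q_def[symmetric]
      unfolding D_def[symmetric] E_def[symmetric]
      using \<open>D \<noteq> 0\<close> \<open>E \<noteq> 0\<close> qpoch_self_nonzero[OF q_pow_neq_1] qpoch_aq_nonzero by (simp add: field_simps)
    moreover have "partial_sum n m = G / (qpoch q q m * qpoch (a * q) q (n + m) * D)"
      unfolding partial_sum_def G_def D_def Q_def Suc by simp
    ultimately have "partial_sum n m + pair_term n n = 0" by simp
    then show ?thesis using partial_sum_eq[of m n] by (simp add: Suc)
  qed
qed

end

section \<open>Primitive roots of unity and the cyclotomic polynomial\<close>

definition unit_root :: "nat \<Rightarrow> nat \<Rightarrow> complex" where
  "unit_root n k = cis (2 * pi * real k / real n)"

lemma unit_root_nonzero: "unit_root n k \<noteq> 0"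
  unfolding unit_root_def by (rule cis_neq_zero)

lemma unit_root_add: "unit_root n (j + k) = unit_root n j * unit_root n k"
  unfolding unit_root_def by (simp add: cis_mult add_divide_distrib distrib_left)

lemma unit_root_pow_eq_1_iff:
  assumes "n > 0"
  shows "unit_root n k ^ e = 1 \<longleftrightarrow> n dvd k * e"
proof -
  have "unit_root n k ^ e = cis (2 * pi * real (k * e) / real n)"
    unfolding unit_root_def DeMoivre by (simp add: field_simps)
  also have "\<dots> = 1 \<longleftrightarrow> (\<exists>m::int. 2 * pi * real (k * e) / real n = of_int m * (2 * pi))"
    by (rule cis_eq_1_iff)
  also have "\<dots> \<longleftrightarrow> (\<exists>m::int. real_of_int (int (k * e)) = real_of_int (int n * m))"
    using assms by (simp add: field_simps)
  also have "\<dots> \<longleftrightarrow> n dvd k * e"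
    by (simp only: of_int_eq_iff dvd_def[symmetric] int_dvd_int_iff)
  finally show ?thesis .
qed

lemma inj_on_unit_root:
  assumes "n > 0"
  shows "inj_on (unit_root n) {1..n}"
proof -
  have "j = k" if "j \<in> {1..n}" "k \<in> {1..n}" "j \<le> k" "unit_root n j = unit_root n k" for j k
  proof -
    have "unit_root n j * unit_root n (k - j) = unit_root n k"
      using that(3) unit_root_add[of n j "k - j"] by simp
    then have "unit_root n (k - j) ^ 1 = 1" using that(4) unit_root_nonzero[of n j] by simp
    then have "n dvd k - j" using unit_root_pow_eq_1_iff[OF assms, of "k - j" 1] by simp
    moreover have "k - j < n" using that by auto
    ultimately show "j = k" using that(3) nat_dvd_not_less[of "k - j" n] by linarith
  qed
  then show ?thesis by (intro inj_onI) (metis nat_le_linear)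
qed

lemma cyclo_altdef: "cyclo n = (\<Prod>k\<in>{k. 1 \<le> k \<and> k \<le> n \<and> coprime k n}. [:- unit_root n k, 1:])"
  unfolding cyclo_def unit_root_def ..

lemma cyclo_nonzero: "cyclo n \<noteq> 0"
  unfolding cyclo_altdef by (auto simp: prod_zero_iff)

lemma cyclo_rootE:
  assumes "poly (cyclo n) w = 0"
  obtains k where "1 \<le> k" "k \<le> n" "coprime k n" "w = unit_root n k"
  using assms unfolding cyclo_altdef by (auto simp: poly_prod prod_zero_iff)

lemma prod_linear_factors_dvd:
  fixes z :: "'b \<Rightarrow> 'a::idom" and p :: "'a poly"
  assumes "finite S" "inj_on z S" "\<And>k. k \<in> S \<Longrightarrow> poly p (z k) = 0"
  shows "(\<Prod>k\<in>S. [:- z k, 1:]) dvd p"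
  using assms
proof (induction S arbitrary: p rule: finite_induct)
  case empty
  then show ?case by simp
next
  case (insert k S)
  have "[:- z k, 1:] dvd p" using insert.prems(2) by (simp add: poly_eq_0_iff_dvd)
  then obtain p' where p: "p = [:- z k, 1:] * p'" by (rule dvdE)
  have "z j \<noteq> z k" if "j \<in> S" for j
    using insert.prems(1) insert.hyps(2) that by (auto simp: inj_on_def)
  then have "poly p' (z j) = 0" if "j \<in> S" for j
    using insert.prems(2)[of j] that p by simp
  then have "(\<Prod>k\<in>S. [:- z k, 1:]) dvd p'"
    using insert.IH insert.prems(1) by (simp add: inj_on_insert)
  then show ?case
    unfolding p prod.insert[OF insert.hyps] by (rule mult_dvd_mono[OF dvd_refl])
qed

lemma cyclo_dvd_one_minus_X_pow:
  assumes "n > 0" "n dvd e"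
  shows "cyclo n dvd 1 - [:0, 1:] ^ e"
  unfolding cyclo_altdef
proof (rule prod_linear_factors_dvd)
  show "inj_on (unit_root n) {k. 1 \<le> k \<and> k \<le> n \<and> coprime k n}"
    by (rule inj_on_subset[OF inj_on_unit_root[OF assms(1)]]) auto
  show "poly (1 - [:0, 1:] ^ e) (unit_root n k) = 0" for k
    using assms unit_root_pow_eq_1_iff by (simp add: poly_power)
qed simp

lemma poly_cyclo_root_pow_neq_1:
  assumes "poly (cyclo n) w = 0" "\<not> n dvd e"
  shows "w ^ e \<noteq> 1"
proof -
  obtain k where k: "1 \<le> k" "k \<le> n" "coprime k n" "w = unit_root n k"
    using assms(1) by (rule cyclo_rootE)
  have "\<not> n dvd k * e"
    using assms(2) k(3) by (metis coprime_commute coprime_dvd_mult_right_iff)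
  then show ?thesis using k unit_root_pow_eq_1_iff by simp
qed

lemma poly_cyclo_root_nonzero: "poly (cyclo n) w = 0 \<Longrightarrow> w \<noteq> 0"
  by (metis cyclo_rootE unit_root_nonzero)

lemma coprime_if_no_common_root:
  fixes p q :: "complex poly"
  assumes "q \<noteq> 0" "\<And>w. poly q w = 0 \<Longrightarrow> poly p w \<noteq> 0"
  shows "coprime p q"
proof (rule coprimeI)
  fix g assume g: "g dvd p" "g dvd q"
  have "degree g = 0"
  proof (rule ccontr)
    assume "degree g \<noteq> 0"
    then have "\<not> constant (poly g)" by (simp add: constant_degree)
    then obtain w where "poly g w = 0" using fundamental_theorem_of_algebra by blast
    then show False using g assms(2) by (metis dvd_def mult_eq_0_iff poly_mult)
  qed
  moreover have "g \<noteq> 0" using g(2) assms(1) by auto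
  ultimately show "is_unit g" by (simp add: is_unit_iff_degree)
qed

section \<open>The local ring of rational functions at \<open>\<Phi>\<^sub>n\<close>\<close>

definition prime_to_cyclo :: "nat \<Rightarrow> complex poly \<Rightarrow> bool" where
  "prime_to_cyclo n p \<longleftrightarrow> p \<noteq> 0 \<and> (\<forall>w. poly (cyclo n) w = 0 \<longrightarrow> poly p w \<noteq> 0)"

text \<open>\<open>cyclo_divides n k x\<close> says that \<open>x\<close> lies in \<open>\<Phi>\<^sub>n\<^sup>k\<close> times the localisation of
  \<open>\<complex>[q]\<close> at \<open>\<Phi>\<^sub>n\<close>, that is \<open>x \<equiv> 0 (mod \<Phi>\<^sub>n\<^sup>k)\<close>; for \<open>k = 0\<close> it says that \<open>x\<close> is \<open>\<Phi>\<^sub>n\<close>-integral.\<close>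

definition cyclo_divides :: "nat \<Rightarrow> nat \<Rightarrow> ratfun \<Rightarrow> bool" where
  "cyclo_divides n k x \<longleftrightarrow> (\<exists>a b. prime_to_cyclo n b \<and> cyclo n ^ k dvd a \<and> x = Fract a b)"

definition cyclo_unit :: "nat \<Rightarrow> ratfun \<Rightarrow> bool" where
  "cyclo_unit n x \<longleftrightarrow> (\<exists>a b. prime_to_cyclo n a \<and> prime_to_cyclo n b \<and> x = Fract a b)"

lemma prime_to_cyclo_1: "prime_to_cyclo n 1"
  unfolding prime_to_cyclo_def by simp

lemma prime_to_cyclo_mult: "prime_to_cyclo n p \<Longrightarrow> prime_to_cyclo n q \<Longrightarrow> prime_to_cyclo n (p * q)"
  unfolding prime_to_cyclo_def by auto

lemma prime_to_cyclo_uminus: "prime_to_cyclo n p \<Longrightarrow> prime_to_cyclo n (- p)"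
  unfolding prime_to_cyclo_def by auto

lemma prime_to_cyclo_X_pow: "prime_to_cyclo n ([:0, 1:] ^ m)"
  unfolding prime_to_cyclo_def using poly_cyclo_root_nonzero by (auto simp: poly_power)

lemma prime_to_cyclo_one_minus_X_pow:
  assumes "\<not> n dvd m"
  shows "prime_to_cyclo n (1 - [:0, 1:] ^ m)"
proof -
  have "m \<noteq> 0" using assms by (metis dvd_0_right)
  then have "poly (1 - [:0, 1:] ^ m :: complex poly) 0 \<noteq> 0" by (simp add: poly_power power_0_left)
  then have "1 - [:0, 1:] ^ m \<noteq> (0 :: complex poly)" by (metis poly_0)
  moreover have "poly (1 - [:0, 1:] ^ m) w \<noteq> 0" if "poly (cyclo n) w = 0" for w
    using poly_cyclo_root_pow_neq_1[OF that assms] by (simp add: poly_power)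
  ultimately show ?thesis unfolding prime_to_cyclo_def by blast
qed

lemma cyclo_dividesI: "prime_to_cyclo n b \<Longrightarrow> cyclo n ^ k dvd a \<Longrightarrow> cyclo_divides n k (Fract a b)"
  unfolding cyclo_divides_def by blast

lemma cyclo_unitI: "prime_to_cyclo n a \<Longrightarrow> prime_to_cyclo n b \<Longrightarrow> cyclo_unit n (Fract a b)"
  unfolding cyclo_unit_def by blast

lemma cyclo_dividesE:
  assumes "cyclo_divides n k x"
  obtains a b where "prime_to_cyclo n b" "cyclo n ^ k dvd a" "x = Fract a b"
  using assms unfolding cyclo_divides_def by blast

lemma cyclo_unitE:
  assumes "cyclo_unit n x"
  obtains a b where "prime_to_cyclo n a" "prime_to_cyclo n b" "x = Fract a b"
  using assms unfolding cyclo_unit_def by blast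

lemma cyclo_divides_0 [simp]: "cyclo_divides n k 0"
  unfolding cyclo_divides_def using prime_to_cyclo_1 by (auto simp: Zero_fract_def)

lemma cyclo_divides_1: "cyclo_divides n 0 1"
  unfolding cyclo_divides_def using prime_to_cyclo_1 by (auto simp: One_fract_def)

lemma cyclo_divides_add:
  assumes "cyclo_divides n k x" "cyclo_divides n k y"
  shows "cyclo_divides n k (x + y)"
proof -
  obtain a b where x: "prime_to_cyclo n b" "cyclo n ^ k dvd a" "x = Fract a b"
    using assms(1) by (rule cyclo_dividesE)
  obtain a' b' where y: "prime_to_cyclo n b'" "cyclo n ^ k dvd a'" "y = Fract a' b'"
    using assms(2) by (rule cyclo_dividesE)
  have "x + y = Fract (a * b' + a' * b) (b * b')"
    using x y by (simp add: prime_to_cyclo_def)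
  moreover have "cyclo n ^ k dvd a * b' + a' * b" using x y by simp
  ultimately show ?thesis
    unfolding cyclo_divides_def using x(1) y(1) prime_to_cyclo_mult by blast
qed

lemma cyclo_divides_uminus:
  assumes "cyclo_divides n k x"
  shows "cyclo_divides n k (- x)"
proof -
  obtain a b where x: "prime_to_cyclo n b" "cyclo n ^ k dvd a" "x = Fract a b"
    using assms by (rule cyclo_dividesE)
  then have "- x = Fract (- a) b" "cyclo n ^ k dvd - a" by simp_all
  then show ?thesis unfolding cyclo_divides_def using x(1) by blast
qed

lemma cyclo_divides_diff:
  "cyclo_divides n k x \<Longrightarrow> cyclo_divides n k y \<Longrightarrow> cyclo_divides n k (x - y)"
  using cyclo_divides_add[of n k x "- y"] cyclo_divides_uminus[of n k y] by simp

lemma cyclo_divides_mult: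
  assumes "cyclo_divides n k x" "cyclo_divides n l y"
  shows "cyclo_divides n (k + l) (x * y)"
proof -
  obtain a b where x: "prime_to_cyclo n b" "cyclo n ^ k dvd a" "x = Fract a b"
    using assms(1) by (rule cyclo_dividesE)
  obtain a' b' where y: "prime_to_cyclo n b'" "cyclo n ^ l dvd a'" "y = Fract a' b'"
    using assms(2) by (rule cyclo_dividesE)
  have "x * y = Fract (a * a') (b * b')" using x y by simp
  moreover have "cyclo n ^ (k + l) dvd a * a'" using x y by (simp add: power_add mult_dvd_mono)
  ultimately show ?thesis
    unfolding cyclo_divides_def using x y prime_to_cyclo_mult by blast
qed

lemma cyclo_divides_mult_integral:
  "cyclo_divides n 0 x \<Longrightarrow> cyclo_divides n k y \<Longrightarrow> cyclo_divides n k (x * y)"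
  using cyclo_divides_mult[of n 0 x k y] by simp

lemma cyclo_divides_mono:
  assumes "cyclo_divides n k x" "l \<le> k"
  shows "cyclo_divides n l x"
proof -
  obtain a b where x: "prime_to_cyclo n b" "cyclo n ^ k dvd a" "x = Fract a b"
    using assms(1) by (rule cyclo_dividesE)
  have "cyclo n ^ l dvd a" using x(2) assms(2) by (meson dvd_trans le_imp_power_dvd)
  then show ?thesis unfolding cyclo_divides_def using x by blast
qed

lemma cyclo_divides_sum:
  "(\<And>i. i \<in> S \<Longrightarrow> cyclo_divides n k (f i)) \<Longrightarrow> cyclo_divides n k (\<Sum>i\<in>S. f i)"
  by (induction S rule: infinite_finite_induct) (auto intro: cyclo_divides_add)

lemma cyclo_divides_prod:
  "(\<And>i. i \<in> S \<Longrightarrow> cyclo_divides n 0 (f i)) \<Longrightarrow> cyclo_divides n 0 (\<Prod>i\<in>S. f i)"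
proof (induction S rule: infinite_finite_induct)
  case (insert x F)
  then show ?case using cyclo_divides_mult[of n 0 "f x" 0] by simp
qed (auto simp: cyclo_divides_1)

lemma cyclo_divides_prod_factor:
  assumes "finite S" "j \<in> S" "cyclo_divides n k (f j)" "\<And>i. i \<in> S \<Longrightarrow> cyclo_divides n 0 (f i)"
  shows "cyclo_divides n k (\<Prod>i\<in>S. f i)"
proof -
  have "cyclo_divides n 0 (\<Prod>i\<in>S - {j}. f i)" using assms(4) by (intro cyclo_divides_prod) auto
  then have "cyclo_divides n k (f j * (\<Prod>i\<in>S - {j}. f i))"
    using cyclo_divides_mult[OF assms(3)] by fastforce
  then show ?thesis by (simp add: prod.remove[OF assms(1,2)])
qed

lemma cyclo_divides_power: "cyclo_divides n k x \<Longrightarrow> cyclo_divides n (k * m) (x ^ m)"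
  by (induction m) (auto simp: cyclo_divides_1 dest: cyclo_divides_mult)

lemma cyclo_divides_prod_diff:
  fixes k :: nat
  assumes "\<And>j. j < k \<Longrightarrow> cyclo_divides n 0 (f j)" "\<And>j. j < k \<Longrightarrow> cyclo_divides n 0 (g j)"
    and "\<And>j. j < k \<Longrightarrow> cyclo_divides n e (f j - g j)"
  shows "cyclo_divides n e ((\<Prod>j<k. f j) - (\<Prod>j<k. g j))"
  using assms
proof (induction k)
  case (Suc k)
  have "cyclo_divides n e ((\<Prod>j<k. f j) - (\<Prod>j<k. g j))" using Suc by simp
  then have "cyclo_divides n (e + 0) (((\<Prod>j<k. f j) - (\<Prod>j<k. g j)) * f k)"
    using Suc.prems(1) by (intro cyclo_divides_mult) simp_all
  moreover have "cyclo_divides n (0 + e) ((\<Prod>j<k. g j) * (f k - g k))"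
    using Suc.prems by (intro cyclo_divides_mult cyclo_divides_prod) simp_all
  moreover have "(\<Prod>j<Suc k. f j) - (\<Prod>j<Suc k. g j)
      = ((\<Prod>j<k. f j) - (\<Prod>j<k. g j)) * f k + (\<Prod>j<k. g j) * (f k - g k)"
    by (simp add: algebra_simps)
  ultimately show ?case by (simp add: cyclo_divides_add)
qed simp

lemma cyclo_unit_imp_cyclo_divides: "cyclo_unit n x \<Longrightarrow> cyclo_divides n 0 x"
  unfolding cyclo_unit_def cyclo_divides_def by auto

lemma cyclo_unit_1: "cyclo_unit n 1"
  unfolding cyclo_unit_def using prime_to_cyclo_1 by (auto simp: One_fract_def)

lemma cyclo_unit_mult:
  assumes "cyclo_unit n x" "cyclo_unit n y"
  shows "cyclo_unit n (x * y)"
proof -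
  obtain a b where x: "prime_to_cyclo n a" "prime_to_cyclo n b" "x = Fract a b"
    using assms(1) by (rule cyclo_unitE)
  obtain a' b' where y: "prime_to_cyclo n a'" "prime_to_cyclo n b'" "y = Fract a' b'"
    using assms(2) by (rule cyclo_unitE)
  have "x * y = Fract (a * a') (b * b')" using x y by simp
  then show ?thesis unfolding cyclo_unit_def using x y prime_to_cyclo_mult by blast
qed

lemma cyclo_unit_inverse:
  assumes "cyclo_unit n x"
  shows "cyclo_unit n (inverse x)"
proof -
  obtain a b where x: "prime_to_cyclo n a" "prime_to_cyclo n b" "x = Fract a b"
    using assms by (rule cyclo_unitE)
  then have "inverse x = Fract b a" by (simp add: prime_to_cyclo_def)
  then show ?thesis unfolding cyclo_unit_def using x by blast
qed

lemma cyclo_unit_power: "cyclo_unit n x \<Longrightarrow> cyclo_unit n (x ^ m)"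
  by (induction m) (auto simp: cyclo_unit_1 cyclo_unit_mult)

lemma cyclo_unit_prod: "(\<And>i. i \<in> S \<Longrightarrow> cyclo_unit n (f i)) \<Longrightarrow> cyclo_unit n (\<Prod>i\<in>S. f i)"
  by (induction S rule: infinite_finite_induct) (auto simp: cyclo_unit_1 cyclo_unit_mult)

lemma cyclo_unit_nonzero: "cyclo_unit n x \<Longrightarrow> x \<noteq> 0"
  unfolding cyclo_unit_def prime_to_cyclo_def by (auto simp: Zero_fract_def eq_fract)

lemma cyclo_divides_divide:
  assumes "cyclo_divides n k x" "cyclo_unit n y"
  shows "cyclo_divides n k (x / y)"
proof -
  have "cyclo_divides n 0 (inverse y)"
    using assms(2) by (intro cyclo_unit_imp_cyclo_divides cyclo_unit_inverse)
  then show ?thesis using cyclo_divides_mult[OF assms(1)] by (fastforce simp: divide_inverse)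
qed

lemma cyclo_divides_divide_diff:
  assumes "cyclo_divides n k (x - x')" "cyclo_divides n k (y - y')" "cyclo_divides n 0 x'"
    and "cyclo_unit n y" "cyclo_unit n y'"
  shows "cyclo_divides n k (x / y - x' / y')"
proof -
  have "x / y - x' / y' = (x - x') / y - x' * (y - y') / (y * y')"
    using assms(4,5)[THEN cyclo_unit_nonzero] by (simp add: field_simps)
  moreover have "cyclo_divides n k (x' * (y - y'))"
    using cyclo_divides_mult[OF assms(3,2)] by simp
  ultimately show ?thesis
    using assms by (simp add: cyclo_divides_diff cyclo_divides_divide cyclo_unit_mult)
qed

lemma fcong_if_cyclo_divides:
  assumes "cyclo_divides n 2 x"
  shows "fcong x 0 ((cyclo n)\<^sup>2)"
proof -
  obtain a b where x: "prime_to_cyclo n b" "cyclo n ^ 2 dvd a" "x = Fract a b"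
    using assms by (rule cyclo_dividesE)
  have "coprime b ((cyclo n)\<^sup>2)"
    using x(1) cyclo_nonzero by (intro coprime_if_no_common_root) (auto simp: prime_to_cyclo_def)
  then show ?thesis
    unfolding fcong_def using x by (auto simp: prime_to_cyclo_def)
qed

section \<open>Powers of \<open>q\<close> modulo \<open>\<Phi>\<^sub>n\<close>\<close>

abbreviation qpow :: "int \<Rightarrow> ratfun" where
  "qpow e \<equiv> qv powi e"

text \<open>Keep \<open>qpow (int d)\<close> from being rewritten to \<open>qv ^ d\<close>, so that all powers of \<open>q\<close> stay in
  the form \<open>qpow e\<close>.\<close>

declare power_int_of_nat [simp del]

lemma qv_nonzero: "qv \<noteq> 0"
  unfolding qv_def by (simp add: Zero_fract_def eq_fract)

lemma qpow_nonzero: "qpow e \<noteq> 0"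
  by (simp add: qv_nonzero)

lemma qpow_mult: "qpow a * qpow b = qpow (a + b)"
  by (simp add: power_int_add qv_nonzero)

lemma qpow_power: "qpow a ^ k = qpow (a * int k)"
  by (simp add: power_int_mult power_int_of_nat)

lemma qpow_nonneg: "0 \<le> e \<Longrightarrow> qpow e = Fract ([:0, 1:] ^ nat e) 1"
proof -
  have "qv ^ m = Fract ([:0, 1:] ^ m) 1" for m
    by (induction m) (simp_all add: qv_def One_fract_def)
  then show "0 \<le> e \<Longrightarrow> ?thesis" by (metis nat_0_le power_int_of_nat)
qed

lemma qpow_neg: "e < 0 \<Longrightarrow> qpow e = Fract 1 ([:0, 1:] ^ nat (- e))"
  using power_int_minus[of qv "- e"] qpow_nonneg[of "- e"] by simp

lemma one_minus_qpow:
  "1 - qpow e = (if 0 \<le> e then Fract (1 - [:0, 1:] ^ nat e) 1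
     else Fract ([:0, 1:] ^ nat (- e) - 1) ([:0, 1:] ^ nat (- e)))"
  by (simp add: qpow_nonneg qpow_neg One_fract_def)

lemma one_minus_qpow_nonzero:
  assumes "e \<noteq> 0"
  shows "1 - qpow e \<noteq> 0"
proof -
  have "poly (1 - [:0, 1:] ^ nat \<bar>e\<bar> :: complex poly) 0 \<noteq> 0"
    using assms by (simp add: poly_power power_0_left)
  then have "1 - [:0, 1:] ^ nat \<bar>e\<bar> \<noteq> (0 :: complex poly)" by (metis poly_0)
  then show ?thesis
    unfolding one_minus_qpow by (auto simp: Zero_fract_def eq_fract abs_if)
qed

lemma cyclo_unit_qpow: "cyclo_unit n (qpow e)"
  by (cases "0 \<le> e") (simp_all add: qpow_nonneg qpow_neg cyclo_unitI prime_to_cyclo_1 prime_to_cyclo_X_pow)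

lemma cyclo_divides_one_minus_qpow: "cyclo_divides n 0 (1 - qpow e)"
  unfolding one_minus_qpow by (simp add: cyclo_dividesI prime_to_cyclo_1 prime_to_cyclo_X_pow)

lemma cyclo_divides_one_minus_qpow_multiple:
  assumes "n > 0" "int n dvd e"
  shows "cyclo_divides n 1 (1 - qpow e)"
proof -
  have "n dvd nat \<bar>e\<bar>" using assms(2) by (metis dvd_abs_iff int_dvd_int_iff abs_ge_zero nat_0_le)
  then have "cyclo n dvd 1 - [:0, 1:] ^ nat \<bar>e\<bar>" by (rule cyclo_dvd_one_minus_X_pow[OF assms(1)])
  then have "cyclo n dvd [:0, 1:] ^ nat \<bar>e\<bar> - 1" by (metis dvd_minus_iff minus_diff_eq)
  then show ?thesis
    unfolding one_minus_qpow using \<open>cyclo n dvd 1 - _\<close>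
    by (auto simp: abs_if cyclo_dividesI prime_to_cyclo_1 prime_to_cyclo_X_pow)
qed

lemma cyclo_unit_one_minus_qpow:
  assumes "\<not> int n dvd e"
  shows "cyclo_unit n (1 - qpow e)"
proof -
  have "\<not> n dvd nat \<bar>e\<bar>" using assms by (metis dvd_abs_iff int_dvd_int_iff abs_ge_zero nat_0_le)
  then have "prime_to_cyclo n (1 - [:0, 1:] ^ nat \<bar>e\<bar>)" "prime_to_cyclo n ([:0, 1:] ^ nat \<bar>e\<bar> - 1)"
    using prime_to_cyclo_uminus prime_to_cyclo_one_minus_X_pow by (metis minus_diff_eq)+
  then show ?thesis
    unfolding one_minus_qpow by (auto simp: abs_if cyclo_unitI prime_to_cyclo_1 prime_to_cyclo_X_pow)
qed

lemma cyclo_divides_qint: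
  assumes "n > 1"
  shows "cyclo_divides n 0 (qint m)"
proof -
  have "cyclo_unit n (1 - qpow 1)"
    using assms by (intro cyclo_unit_one_minus_qpow) auto
  then have "cyclo_unit n (1 - qv)" by simp
  then show ?thesis
    unfolding qint_def by (intro cyclo_divides_divide cyclo_divides_one_minus_qpow)
qed

lemma qpoch_qpow: "qpoch (qpow u) (qpow v) k = (\<Prod>j<k. 1 - qpow (u + v * int j))"
  unfolding qpoch_def by (simp add: qpow_power qpow_mult)

lemma cyclo_divides_qpoch: "cyclo_divides n 0 (qpoch (qpow u) (qpow v) k)"
  unfolding qpoch_qpow by (intro cyclo_divides_prod cyclo_divides_one_minus_qpow)

lemma cyclo_unit_qpoch:
  assumes "\<And>j. j < k \<Longrightarrow> \<not> int n dvd u + v * int j"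
  shows "cyclo_unit n (qpoch (qpow u) (qpow v) k)"
  unfolding qpoch_qpow using assms by (auto intro: cyclo_unit_prod cyclo_unit_one_minus_qpow)

lemma cyclo_divides_qpoch_vanishing:
  assumes "n > 0" "j < k" "int n dvd u + v * int j"
  shows "cyclo_divides n 1 (qpoch (qpow u) (qpow v) k)"
  unfolding qpoch_qpow
  using assms cyclo_divides_one_minus_qpow_multiple cyclo_divides_one_minus_qpow
  by (intro cyclo_divides_prod_factor[of _ j]) auto

text \<open>Since \<open>(1 - q\<^sup>x)\<^sup>2 - (1 - q\<^sup>x\<^sup>+\<^sup>c)(1 - q\<^sup>x\<^sup>-\<^sup>c) = - q\<^sup>x (1 - q\<^sup>c)(1 - q\<^sup>-\<^sup>c)\<close>,
  shifting the two copies of a factor by \<open>\<plusminus>c\<close> with \<open>n | c\<close> changes a square only modulo \<open>\<Phi>\<^sub>n\<^sup>2\<close>.\<close>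

lemma cyclo_divides_one_minus_qpow_square_shift:
  assumes "n > 0" "int n dvd c"
  shows "cyclo_divides n 2 ((1 - qpow x) ^ 2 - (1 - qpow (x + c)) * (1 - qpow (x - c)))"
proof -
  have "(1 - qpow x) ^ 2 - (1 - qpow (x + c)) * (1 - qpow (x - c))
      = - qpow x * ((1 - qpow c) * (1 - qpow (- c)))"
    by (simp add: algebra_simps power2_eq_square qpow_mult flip: diff_conv_add_uminus)
  moreover have "cyclo_divides n (0 + (1 + 1)) (- qpow x * ((1 - qpow c) * (1 - qpow (- c))))"
    using assms
    by (intro cyclo_divides_mult cyclo_divides_uminus cyclo_unit_imp_cyclo_divides cyclo_unit_qpow
        cyclo_divides_one_minus_qpow_multiple) auto
  ultimately show ?thesis by (simp add: numeral_2_eq_2)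
qed

lemma cyclo_divides_qpoch_square_shift:
  assumes "n > 0" "int n dvd c"
  shows "cyclo_divides n 2
    (qpoch (qpow u) (qpow v) k ^ 2 - qpoch (qpow (u + c)) (qpow v) k * qpoch (qpow (u - c)) (qpow v) k)"
proof -
  have "qpoch (qpow u) (qpow v) k ^ 2 - qpoch (qpow (u + c)) (qpow v) k * qpoch (qpow (u - c)) (qpow v) k
      = (\<Prod>j<k. (1 - qpow (u + v * int j)) ^ 2)
        - (\<Prod>j<k. (1 - qpow (u + v * int j + c)) * (1 - qpow (u + v * int j - c)))"
    unfolding qpoch_qpow prod_power_distrib prod.distrib by (simp add: algebra_simps)
  also have "cyclo_divides n 2 \<dots>"
  proof (rule cyclo_divides_prod_diff)
    fix j
    show "cyclo_divides n 0 ((1 - qpow (u + v * int j)) ^ 2)"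
      using cyclo_divides_power[OF cyclo_divides_one_minus_qpow[of n "u + v * int j"], of 2] by simp
    show "cyclo_divides n 0 ((1 - qpow (u + v * int j + c)) * (1 - qpow (u + v * int j - c)))"
      using cyclo_divides_mult[OF cyclo_divides_one_minus_qpow cyclo_divides_one_minus_qpow] by simp
    show "cyclo_divides n 2
        ((1 - qpow (u + v * int j)) ^ 2 - (1 - qpow (u + v * int j + c)) * (1 - qpow (u + v * int j - c)))"
      by (rule cyclo_divides_one_minus_qpow_square_shift[OF assms])
  qed
  finally show ?thesis .
qed

section \<open>Proof of the supercongruence\<close>

locale supercongruence =
  fixes d n :: nat and r :: int
  assumes d_ge_4: "d \<ge> 4" and even_d: "even d" and gcd_d_r: "gcd (int d) r = 1"
    and n_gt_1: "n > 1" and n_cong: "[int n = - r] (mod int d)"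
    and n_ge: "int n \<ge> max r (int d - r)"
begin

definition m :: nat where "m = nat ((int n + r) div int d)"
definition N :: nat where "N = n - m"
definition c :: int where "c = (int d - 1) * int n"
definition steps :: nat where "steps = d div 2 - 1"

lemma n_pos: "n > 0"
  using n_gt_1 by simp

lemma d_times_m: "int d * int m = int n + r"
proof -
  obtain t where t: "int n + r = int d * t" using n_cong by (auto simp: cong_iff_dvd_diff)
  moreover have "int d * t \<ge> int d" using n_ge t by simp
  then have "t \<ge> 1" using d_ge_4 by (simp add: mult_le_cancel_left1)
  ultimately show ?thesis unfolding m_def using d_ge_4 by simp
qed

lemma m_ge_1: "m \<ge> 1"
  using d_times_m n_ge d_ge_4 by (cases m) auto

lemma two_m_le_n: "2 * m \<le> n"
proof -
  have "int d * int m \<le> 2 * int n" using d_times_m n_ge by simp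
  moreover have "4 * int m \<le> int d * int m" using d_ge_4 by (intro mult_right_mono) auto
  ultimately show ?thesis by simp
qed

lemma N_less_n: "N < n"
  unfolding N_def using m_ge_1 two_m_le_n by simp

lemma N_pos: "N > 0"
  unfolding N_def using m_ge_1 two_m_le_n n_gt_1 by simp

lemma d_times_N: "int d * int N + r = c"
  unfolding N_def c_def using two_m_le_n d_times_m by (simp add: of_nat_diff algebra_simps)

lemma n_dvd_c: "int n dvd c"
  unfolding c_def by simp

lemma coprime_d_n: "coprime (int d) (int n)"
proof (rule coprimeI)
  fix g assume g: "g dvd int d" "g dvd int n"
  then have "g dvd int d * int m - int n" by simp
  then have "g dvd r" using d_times_m by simp
  then show "is_unit g" using g gcd_d_r by (metis gcd_greatest_iff is_unit_gcd)
qed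

lemma d_not_dvd_r: "\<not> int d dvd r"
proof
  assume "int d dvd r"
  then have "int d dvd gcd (int d) r" by simp
  then show False using gcd_d_r d_ge_4 by simp
qed

lemma n_not_dvd_d_mult:
  assumes "0 < j" "j < int n"
  shows "\<not> int n dvd int d * j"
proof
  assume "int n dvd int d * j"
  then have "int n dvd j" using coprime_d_n by (simp add: coprime_commute coprime_dvd_mult_right_iff)
  then show False using assms by (meson zdvd_not_zless)
qed

lemma d_mult_neq_c: "int d * j \<noteq> c"
proof
  assume "int d * j = c"
  then have "int d dvd (int d - 1) * int n" unfolding c_def by (metis dvd_triv_left)
  moreover have "coprime (int d) (int d - 1)"
  proof (rule coprimeI)
    fix g assume "g dvd int d" "g dvd int d - 1"
    then have "g dvd int d - (int d - 1)" by (rule dvd_diff)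
    then show "is_unit g" by simp
  qed
  ultimately have "int d dvd int n" by (simp add: coprime_dvd_mult_right_iff)
  then have "is_unit (int d)" using coprime_d_n by (metis coprime_common_divisor dvd_refl)
  then show False using d_ge_4 by simp
qed

lemma steps_pos: "steps > 0"
  unfolding steps_def using d_ge_4 by presburger

lemma steps_bound: "steps * (m - 1) < N"
proof -
  obtain h where h: "d = 2 * h" using even_d by auto
  then have steps: "steps = h - 1" and "h \<ge> 2" unfolding steps_def using d_ge_4 by auto
  have "2 * (int h * int m) \<le> 2 * int n" using d_times_m h n_ge by simp
  then have "(int h - 1) * (int m - 1) < int n - int m"
    using \<open>h \<ge> 2\<close> by (simp add: algebra_simps)
  moreover have "int ((h - 1) * (m - 1)) = (int h - 1) * (int m - 1)" "int (n - m) = int n - int m"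
    using \<open>h \<ge> 2\<close> m_ge_1 two_m_le_n by (simp_all add: of_nat_diff)
  ultimately show ?thesis unfolding N_def steps by linarith
qed

abbreviation qd :: ratfun where "qd \<equiv> qpow (int d)"
abbreviation qr :: ratfun where "qr \<equiv> qpow r"

lemma qd_power: "qd ^ k = qpow (int d * int k)"
  by (simp add: qpow_power)

lemma one_minus_qd_power_nonzero: "1 - qd ^ Suc i \<noteq> 0"
  unfolding qd_power using d_ge_4 by (intro one_minus_qpow_nonzero) simp

lemma cyclo_unit_qpoch_shift:
  assumes "k < n" "int n dvd \<sigma>"
  shows "cyclo_unit n (qpoch (qpow (int d + \<sigma>)) qd k)"
proof (rule cyclo_unit_qpoch)
  fix j assume "j < k"
  show "\<not> int n dvd int d + \<sigma> + int d * int j"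
  proof
    assume "int n dvd int d + \<sigma> + int d * int j"
    then have "int n dvd int d + \<sigma> + int d * int j - \<sigma>" using assms(2) by (rule dvd_diff)
    then have "int n dvd int d * (1 + int j)" by (simp add: algebra_simps)
    then show False using n_not_dvd_d_mult[of "1 + int j"] \<open>j < k\<close> assms(1) by simp
  qed
qed

lemma cyclo_unit_qpoch_qd: "k < n \<Longrightarrow> cyclo_unit n (qpoch qd qd k)"
  using cyclo_unit_qpoch_shift[of k 0] by simp

lemma one_minus_qr_qd_power_nonzero: "1 - qr * qd * qd ^ i \<noteq> 0"
proof -
  have eq: "qr * qd * qd ^ i = qpow (r + int d * (1 + int i))"
    unfolding qd_power qpow_mult by (simp add: algebra_simps)
  have "r + int d * (1 + int i) \<noteq> 0"
    using d_not_dvd_r by (metis add_eq_0_iff dvd_minus_iff dvd_triv_left)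
  then show ?thesis unfolding eq by (rule one_minus_qpow_nonzero)
qed

abbreviation bailey_alpha_shift :: "int \<Rightarrow> (nat \<Rightarrow> ratfun) \<Rightarrow> nat \<Rightarrow> ratfun" where
  "bailey_alpha_shift \<sigma> \<equiv> bailey_alpha qd (qpow (r + \<sigma>)) qr (qpow (int d - r - \<sigma>))"

abbreviation bailey_beta_shift :: "int \<Rightarrow> (nat \<Rightarrow> ratfun) \<Rightarrow> nat \<Rightarrow> ratfun" where
  "bailey_beta_shift \<sigma> \<equiv> bailey_beta qd (qpow (r + \<sigma>)) qr (qpow (int d - r - \<sigma>))"

lemma bailey_pair_step:
  assumes "bailey_pair qr qd \<alpha> \<beta>" "\<sigma> = 0 \<or> \<sigma> = c"
  shows "bailey_pair qr qd (bailey_alpha_shift \<sigma> \<alpha>) (bailey_beta_shift \<sigma> \<beta>)"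
proof (rule bailey_lemma[OF _ one_minus_qd_power_nonzero one_minus_qr_qd_power_nonzero _ _ assms(1)])
  show "qr * qd = qpow (r + \<sigma>) * qr * qpow (int d - r - \<sigma>)"
    by (simp add: qpow_mult)
  show "1 - qr * qpow (int d - r - \<sigma>) * qd ^ i \<noteq> 0" for i
  proof -
    have eq: "qr * qpow (int d - r - \<sigma>) * qd ^ i = qpow (int d * (1 + int i) - \<sigma>)"
      unfolding qd_power qpow_mult by (simp add: algebra_simps)
    have "int d * (1 + int i) - \<sigma> \<noteq> 0"
      using assms(2) d_mult_neq_c[of "1 + int i"] d_ge_4 by auto
    then show ?thesis unfolding eq by (rule one_minus_qpow_nonzero)
  qed
  show "1 - qpow (r + \<sigma>) * qpow (int d - r - \<sigma>) * qd ^ i \<noteq> 0" for i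
    using one_minus_qd_power_nonzero[of i] by (simp add: qpow_mult)
qed

definition alpha :: "nat \<Rightarrow> ratfun" where
  "alpha = (bailey_alpha_shift 0 ^^ (steps - 1)) (bailey_alpha_shift c (unit_alpha qr qd))"

definition beta :: "nat \<Rightarrow> ratfun" where
  "beta = (bailey_beta_shift 0 ^^ (steps - 1)) (bailey_beta_shift c (\<lambda>n. if n = 0 then 1 else 0))"

lemma bailey_pair_alpha_beta: "bailey_pair qr qd alpha beta"
proof -
  have "1 - qr \<noteq> 0" using d_not_dvd_r by (intro one_minus_qpow_nonzero) auto
  then have "bailey_pair qr qd (unit_alpha qr qd) (\<lambda>n. if n = 0 then 1 else 0)"
    using unit_bailey_pair one_minus_qd_power_nonzero one_minus_qr_qd_power_nonzero by blast
  then have "bailey_pair qr qd (bailey_alpha_shift c (unit_alpha qr qd))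
      (bailey_beta_shift c (\<lambda>n. if n = 0 then 1 else 0))"
    by (rule bailey_pair_step) simp
  then have "bailey_pair qr qd ((bailey_alpha_shift 0 ^^ k) (bailey_alpha_shift c (unit_alpha qr qd)))
      ((bailey_beta_shift 0 ^^ k) (bailey_beta_shift c (\<lambda>n. if n = 0 then 1 else 0)))" for k
    by (induction k) (simp_all add: bailey_pair_step[of _ _ 0, simplified])
  then show ?thesis unfolding alpha_def beta_def .
qed

definition vanishes_beyond :: "nat \<Rightarrow> (nat \<Rightarrow> ratfun) \<Rightarrow> bool" where
  "vanishes_beyond t \<beta> \<longleftrightarrow> (\<forall>j\<le>N. cyclo_divides n 0 (\<beta> j) \<and> (t < j \<longrightarrow> cyclo_divides n 1 (\<beta> j)))"

lemma bailey_beta_coefficient: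
  assumes "int n dvd \<sigma>" "i \<le> j" "j \<le> N"
  defines "L \<equiv> qpow (int d - r - \<sigma>)"
  defines "a \<equiv> qpoch (qpow (r + \<sigma>)) qd i * qpoch qr qd i * qpoch L qd (j - i) * L ^ i /
    (qpoch qd qd (j - i) * qpoch (qr * L) qd j * qpoch (qpow (r + \<sigma>) * L) qd j)"
  shows "cyclo_divides n 0 a" and "m \<le> j - i \<Longrightarrow> cyclo_divides n 1 a"
proof -
  have "j < n" using assms(3) N_less_n by simp
  have "qr * L = qpow (int d - \<sigma>)" "qpow (r + \<sigma>) * L = qd"
    unfolding L_def qpow_mult by simp_all
  moreover have "cyclo_unit n (qpoch (qpow (int d - \<sigma>)) qd j)"
    using cyclo_unit_qpoch_shift[of j "- \<sigma>"] \<open>j < n\<close> assms(1) by simp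
  ultimately have denom: "cyclo_unit n (qpoch qd qd (j - i) * qpoch (qr * L) qd j * qpoch (qpow (r + \<sigma>) * L) qd j)"
    using \<open>j < n\<close> by (simp add: cyclo_unit_mult cyclo_unit_qpoch_qd)
  have num: "cyclo_divides n 0 (qpoch (qpow (r + \<sigma>)) qd i * qpoch qr qd i * L ^ i)"
    unfolding L_def
    by (intro cyclo_divides_mult_integral cyclo_divides_qpoch cyclo_unit_imp_cyclo_divides
        cyclo_unit_power cyclo_unit_qpow)
  have a: "a = qpoch (qpow (r + \<sigma>)) qd i * qpoch qr qd i * L ^ i * qpoch L qd (j - i) /
    (qpoch qd qd (j - i) * qpoch (qr * L) qd j * qpoch (qpow (r + \<sigma>) * L) qd j)"
    unfolding a_def by (simp add: mult_ac)
  show "cyclo_divides n 0 a"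
    unfolding a L_def using cyclo_divides_mult[OF num cyclo_divides_qpoch] denom
    by (simp add: L_def cyclo_divides_divide)
  assume "m \<le> j - i"
  have eqn: "int d - r - \<sigma> + int d * int (m - 1) = int n - \<sigma>"
    using d_times_m m_ge_1 by (simp add: of_nat_diff algebra_simps)
  have "int n dvd int d - r - \<sigma> + int d * int (m - 1)"
    unfolding eqn using assms(1) by simp
  then have "cyclo_divides n 1 (qpoch L qd (j - i))"
    unfolding L_def using \<open>m \<le> j - i\<close> m_ge_1
    by (intro cyclo_divides_qpoch_vanishing[OF n_pos, of "m - 1"]) simp_all
  then show "cyclo_divides n 1 a"
    unfolding a using cyclo_divides_mult[OF num] denom by (simp add: cyclo_divides_divide)
qed

lemma vanishes_beyond_bailey_beta_shift:
  assumes "vanishes_beyond t \<beta>" "int n dvd \<sigma>"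
  shows "vanishes_beyond (t + (m - 1)) (bailey_beta_shift \<sigma> \<beta>)"
  unfolding vanishes_beyond_def
proof (intro allI impI conjI)
  fix j assume "j \<le> N"
  have \<beta>: "cyclo_divides n 0 (\<beta> i)" "t < i \<Longrightarrow> cyclo_divides n 1 (\<beta> i)" if "i \<le> j" for i
    using assms(1) that \<open>j \<le> N\<close> unfolding vanishes_beyond_def by auto
  note coeff = bailey_beta_coefficient[OF assms(2) _ \<open>j \<le> N\<close>]
  show "cyclo_divides n 0 (bailey_beta_shift \<sigma> \<beta> j)"
    unfolding bailey_beta_def using coeff(1) \<beta>(1)
    by (intro cyclo_divides_sum cyclo_divides_mult_integral) auto
  assume "t + (m - 1) < j"
  have term_divisible: "cyclo_divides n 1 (w * \<beta> i)"
    if "i \<le> j" "cyclo_divides n 0 w" "m \<le> j - i \<Longrightarrow> cyclo_divides n 1 w" for w i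
  proof (cases "t < i")
    case True
    then show ?thesis using that(2) \<beta>(2)[OF that(1)] by (rule_tac cyclo_divides_mult_integral)
  next
    case False
    then have "cyclo_divides n 1 w" using that \<open>t + (m - 1) < j\<close> by auto
    then show ?thesis using cyclo_divides_mult[OF _ \<beta>(1)[OF that(1)]] by simp
  qed
  show "cyclo_divides n 1 (bailey_beta_shift \<sigma> \<beta> j)"
    unfolding bailey_beta_def by (rule cyclo_divides_sum, rule term_divisible) (use coeff in auto)
qed

lemma cyclo_divides_beta_N: "cyclo_divides n 1 (beta N)"
proof -
  have "vanishes_beyond 0 (\<lambda>n. if n = 0 then 1 else 0)"
    unfolding vanishes_beyond_def by (simp add: cyclo_divides_1)
  then have "vanishes_beyond (m - 1) (bailey_beta_shift c (\<lambda>n. if n = 0 then 1 else 0))"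
    using vanishes_beyond_bailey_beta_shift[OF _ n_dvd_c] by fastforce
  then have "vanishes_beyond ((m - 1) + k * (m - 1))
      ((bailey_beta_shift 0 ^^ k) (bailey_beta_shift c (\<lambda>n. if n = 0 then 1 else 0)))" for k
  proof (induction k)
    case (Suc k)
    then show ?case using vanishes_beyond_bailey_beta_shift[OF Suc.IH, of 0] by (simp add: add_ac)
  qed simp
  moreover obtain s where "steps = Suc s" using steps_pos by (cases steps) auto
  then have "(m - 1) + (steps - 1) * (m - 1) = steps * (m - 1)" by simp
  ultimately show ?thesis
    using steps_bound unfolding beta_def vanishes_beyond_def by fastforce
qed

definition summand :: "nat \<Rightarrow> ratfun" where
  "summand k = qint (2 * int d * int k + r) * qpoch qr qd k ^ d / qpoch qd qd k ^ d
     * qpow (int d * (int d - r - 2) * int k div 2)"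

definition bailey_summand :: "nat \<Rightarrow> ratfun" where
  "bailey_summand k = qint r * qpoch qd qd N * qpoch (qr * qd) qd N
     * (alpha k / (qpoch qd qd (N - k) * qpoch (qr * qd) qd (N + k)))"

lemma alpha_eq:
  "alpha k = unit_alpha qr qd k
     * (qpoch (qpow (r + c)) qd k * qpoch qr qd k * qpow (int d - r - c) ^ k
        / (qpoch (qpow (int d - c)) qd k * qpoch qd qd k))
     * (qpoch qr qd k * qpoch qr qd k * qpow (int d - r) ^ k / (qpoch qd qd k * qpoch qd qd k)) ^ (steps - 1)"
proof -
  have "qr * qpow (int d - r - c) = qpow (int d - c)" "qpow (r + c) * qpow (int d - r - c) = qd"
    "qr * qpow (int d - r) = qd"
    by (simp_all add: qpow_mult)
  then show ?thesis
    unfolding alpha_def funpow_bailey_alpha by (simp add: bailey_alpha_def mult_ac)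
qed

lemma qpoch_qd_ratio:
  assumes "k \<le> N"
  shows "(-1) ^ k * qd ^ (k * (k - 1) div 2) * qpoch qd qd N / qpoch qd qd (N - k)
    = qpow (int d * int N * int k) * qpoch (qpow (r - c)) qd k"
proof -
  have "r - c = - (int d * int N)" using d_times_N by simp
  then have "inverse (qd ^ N) = qpow (r - c)" by (simp add: qd_power power_int_minus)
  moreover have "qd ^ (N * k) = qpow (int d * int N * int k)" by (simp add: qd_power mult.assoc)
  ultimately have eq: "(-1) ^ k * qd ^ (k * (k - 1) div 2) * qpoch qd qd N
      = qpoch qd qd (N - k) * (qpow (int d * int N * int k) * qpoch (qpow (r - c)) qd k)"
    using qpoch_inverse_power[OF qpow_nonzero assms, of "int d"] by (simp only: mult_ac)
  have "qpoch qd qd (N - k) \<noteq> 0"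
    using N_less_n by (intro cyclo_unit_nonzero[of n] cyclo_unit_qpoch_qd) simp
  then show ?thesis unfolding eq by simp
qed

lemma qpoch_qr_qd_ratio:
  "qpoch (qr * qd) qd N / qpoch (qr * qd) qd (N + k) = 1 / qpoch (qpow (int d + c)) qd k"
proof -
  have "qr * qd * qd ^ N = qpow (int d + c)"
    by (simp add: qd_power qpow_mult algebra_simps flip: d_times_N)
  moreover have "qpoch (qr * qd) qd N \<noteq> 0"
    using one_minus_qr_qd_power_nonzero by (simp add: qpoch_nonzero)
  ultimately show ?thesis by (simp add: qpoch_add)
qed

lemma qint_times_unit_alpha_factor:
  "qint r * (1 - qr * qd ^ (2 * k)) / (1 - qr) = qint (2 * int d * int k + r)"
proof -
  have "1 - qr \<noteq> 0" using d_not_dvd_r by (intro one_minus_qpow_nonzero) auto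
  moreover have "qr * qd ^ (2 * k) = qpow (2 * int d * int k + r)"
    by (simp add: qd_power qpow_mult algebra_simps)
  ultimately show ?thesis by (simp add: qint_def)
qed

lemma qpow_factors_product:
  "qpow (int d * int N * int k) * qpow (int d - r - c) ^ k * (qpow (int d - r) ^ k) ^ (steps - 1)
    = qpow (int d * (int d - r - 2) * int k div 2)"
proof -
  obtain h where h: "d = 2 * h" using even_d by auto
  then have d: "int d = 2 * int h" by simp
  have steps: "int (steps - 1) = int h - 2" using h d_ge_4 unfolding steps_def by simp
  have dN: "int d * int N = c - r" using d_times_N by simp
  have "int d * int N * int k + (int d - r - c) * int k + (int d - r) * int k * int (steps - 1)
      = int k * (int d * int N + int d - r - c + (int d - r) * (int h - 2))"
    unfolding steps by (simp add: algebra_simps)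
  also have "\<dots> = int k * (int h * (2 * int h - r - 2))"
    unfolding dN unfolding d by (simp add: algebra_simps)
  also have "\<dots> = int d * (int d - r - 2) * int k div 2"
  proof -
    have eq: "int d * (int d - r - 2) * int k = 2 * (int k * (int h * (2 * int h - r - 2)))"
      unfolding d by (simp add: algebra_simps)
    show ?thesis unfolding eq by simp
  qed
  finally have exponent: "int d * int N * int k + (int d - r - c) * int k + (int d - r) * int k * int (steps - 1)
      = int d * (int d - r - 2) * int k div 2" .
  have "qpow (int d * int N * int k) * qpow (int d - r - c) ^ k * (qpow (int d - r) ^ k) ^ (steps - 1)
      = qpow (int d * int N * int k + (int d - r - c) * int k + (int d - r) * int k * int (steps - 1))"
    by (simp only: qpow_power qpow_mult)
  then show ?thesis unfolding exponent .
qed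

definition common_factor :: "nat \<Rightarrow> ratfun" where
  "common_factor k = qint (2 * int d * int k + r) * (qpoch qr qd k / qpoch qd qd k) ^ (d - 2)
     * qpow (int d * (int d - r - 2) * int k div 2)"

lemma summand_eq: "summand k = common_factor k * (qpoch qr qd k ^ 2 / qpoch qd qd k ^ 2)"
proof -
  have "d - 2 + 2 = d" using d_ge_4 by simp
  then have "x ^ (d - 2) * x ^ 2 = x ^ d" for x :: ratfun by (simp only: power_add [symmetric])
  then have "qpoch qr qd k ^ d / qpoch qd qd k ^ d
      = (qpoch qr qd k / qpoch qd qd k) ^ (d - 2) * (qpoch qr qd k ^ 2 / qpoch qd qd k ^ 2)"
    by (simp only: power_divide times_divide_times_eq)
  then show ?thesis
    unfolding summand_def common_factor_def times_divide_eq_right[symmetric] by (simp add: mult_ac)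
qed

lemma bailey_summand_eq:
  assumes "k \<le> N"
  shows "bailey_summand k = common_factor k * (qpoch (qpow (r + c)) qd k * qpoch (qpow (r - c)) qd k
    / (qpoch (qpow (int d + c)) qd k * qpoch (qpow (int d - c)) qd k))"
proof -
  define a p where "a = qpoch qr qd k" and "p = qpoch qd qd k"
  have "bailey_summand k
      = (qint r * (1 - qr * qd ^ (2 * k)) / (1 - qr))
        * ((-1) ^ k * qd ^ (k * (k - 1) div 2) * qpoch qd qd N / qpoch qd qd (N - k))
        * (qpoch (qr * qd) qd N / qpoch (qr * qd) qd (N + k)) * (a / p)
        * (qpoch (qpow (r + c)) qd k * a * qpow (int d - r - c) ^ k / (qpoch (qpow (int d - c)) qd k * p))
        * (a * a * qpow (int d - r) ^ k / (p * p)) ^ (steps - 1)"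
    unfolding bailey_summand_def alpha_eq unit_alpha_def a_def p_def
    by (simp add: divide_inverse inverse_mult_distrib mult_ac)
  also have "\<dots> = qint (2 * int d * int k + r) * (a / p) ^ (2 + 2 * (steps - 1))
      * (qpow (int d * int N * int k) * qpow (int d - r - c) ^ k * (qpow (int d - r) ^ k) ^ (steps - 1))
      * (qpoch (qpow (r + c)) qd k * qpoch (qpow (r - c)) qd k
         / (qpoch (qpow (int d + c)) qd k * qpoch (qpow (int d - c)) qd k))"
    unfolding qint_times_unit_alpha_factor qpoch_qd_ratio[OF assms] qpoch_qr_qd_ratio
    by (simp add: divide_inverse inverse_mult_distrib power_mult_distrib power_add power_mult
        power2_eq_square mult_ac)
  also have "2 + 2 * (steps - 1) = d - 2"
    using d_ge_4 even_d steps_pos unfolding steps_def by auto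
  finally show ?thesis unfolding qpow_factors_product common_factor_def a_def p_def by (simp add: mult_ac)
qed

lemma cyclo_divides_common_factor:
  assumes "k < n"
  shows "cyclo_divides n 0 (common_factor k)"
proof -
  have "cyclo_divides n (0 * (d - 2)) ((qpoch qr qd k / qpoch qd qd k) ^ (d - 2))"
    using assms by (intro cyclo_divides_power cyclo_divides_divide cyclo_divides_qpoch cyclo_unit_qpoch_qd)
  then show ?thesis
    unfolding common_factor_def using cyclo_divides_qint[OF n_gt_1]
    by (simp add: cyclo_divides_mult_integral cyclo_unit_imp_cyclo_divides cyclo_unit_qpow)
qed

lemma cyclo_divides_summand_minus_bailey_summand:
  assumes "k \<le> N"
  shows "cyclo_divides n 2 (summand k - bailey_summand k)"
proof -
  have "k < n" using assms N_less_n by simp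
  have "cyclo_divides n 2 (qpoch qr qd k ^ 2 / qpoch qd qd k ^ 2
      - qpoch (qpow (r + c)) qd k * qpoch (qpow (r - c)) qd k
        / (qpoch (qpow (int d + c)) qd k * qpoch (qpow (int d - c)) qd k))"
  proof (rule cyclo_divides_divide_diff)
    show "cyclo_divides n 2 (qpoch qr qd k ^ 2 - qpoch (qpow (r + c)) qd k * qpoch (qpow (r - c)) qd k)"
      "cyclo_divides n 2 (qpoch qd qd k ^ 2 - qpoch (qpow (int d + c)) qd k * qpoch (qpow (int d - c)) qd k)"
      by (rule cyclo_divides_qpoch_square_shift[OF n_pos n_dvd_c])+
    show "cyclo_divides n 0 (qpoch (qpow (r + c)) qd k * qpoch (qpow (r - c)) qd k)"
      by (intro cyclo_divides_mult_integral cyclo_divides_qpoch)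
    show "cyclo_unit n (qpoch qd qd k ^ 2)"
      using \<open>k < n\<close> by (intro cyclo_unit_power cyclo_unit_qpoch_qd)
    show "cyclo_unit n (qpoch (qpow (int d + c)) qd k * qpoch (qpow (int d - c)) qd k)"
      using \<open>k < n\<close> n_dvd_c cyclo_unit_qpoch_shift[of k "- c"]
      by (intro cyclo_unit_mult cyclo_unit_qpoch_shift) simp_all
  qed
  then show ?thesis
    unfolding summand_eq bailey_summand_eq[OF assms] right_diff_distrib[symmetric]
    using cyclo_divides_mult_integral[OF cyclo_divides_common_factor[OF \<open>k < n\<close>]] by blast
qed

lemma cyclo_divides_summand_tail:
  assumes "N < k" "k < n"
  shows "cyclo_divides n 2 (summand k)"
proof -
  have "int n dvd r + int d * int N" using d_times_N n_dvd_c by (simp add: add.commute)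
  with n_pos assms(1) have "cyclo_divides n 1 (qpoch qr qd k)"
    by (rule cyclo_divides_qpoch_vanishing)
  then have "cyclo_divides n (1 * d) (qpoch qr qd k ^ d)" by (rule cyclo_divides_power)
  then have "cyclo_divides n 2 (qpoch qr qd k ^ d)" using d_ge_4 by (simp add: cyclo_divides_mono)
  then have "cyclo_divides n 2 (qint (2 * int d * int k + r) * qpoch qr qd k ^ d / qpoch qd qd k ^ d)"
    using assms(2) n_gt_1
    by (intro cyclo_divides_divide cyclo_divides_mult_integral cyclo_divides_qint cyclo_unit_power
        cyclo_unit_qpoch_qd)
  then show ?thesis
    unfolding summand_def using cyclo_unit_imp_cyclo_divides[OF cyclo_unit_qpow]
    by (metis add_0_right cyclo_divides_mult)
qed

lemma cyclo_divides_sum_bailey_summand: "cyclo_divides n 2 (\<Sum>k\<le>N. bailey_summand k)"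
proof -
  have "(\<Sum>k\<le>N. bailey_summand k) = qint r * qpoch qd qd N * qpoch (qr * qd) qd N * beta N"
    using bailey_pair_alpha_beta unfolding bailey_pair_def bailey_summand_def
    by (simp add: sum_distrib_left)
  moreover have "cyclo_divides n 1 (qpoch (qr * qd) qd N)"
  proof -
    have "r + int d + int d * int (N - 1) = c" using d_times_N N_pos by (simp add: of_nat_diff algebra_simps)
    then have "int n dvd r + int d + int d * int (N - 1)" using n_dvd_c by simp
    then have "cyclo_divides n 1 (qpoch (qpow (r + int d)) qd N)"
      by (rule cyclo_divides_qpoch_vanishing[OF n_pos, rotated]) (use N_pos in simp)
    then show ?thesis by (simp add: qpow_mult)
  qed
  ultimately show ?thesis
    using cyclo_divides_mult[OF _ cyclo_divides_beta_N] cyclo_divides_qint[OF n_gt_1]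
      cyclo_unit_imp_cyclo_divides[OF cyclo_unit_qpoch_qd[OF N_less_n]]
    by (simp add: cyclo_divides_mult_integral numeral_2_eq_2)
qed

lemma cyclo_divides_sum_summand: "cyclo_divides n 2 (\<Sum>k<n. summand k)"
proof -
  have "{..<n} = {..N} \<union> {N<..<n}" using N_less_n by auto
  then have "(\<Sum>k<n. summand k) = (\<Sum>k\<le>N. summand k) + (\<Sum>k\<in>{N<..<n}. summand k)"
    by (simp add: sum.union_disjoint ivl_disj_int)
  then have "(\<Sum>k<n. summand k)
      = (\<Sum>k\<le>N. summand k - bailey_summand k) + (\<Sum>k\<le>N. bailey_summand k) + (\<Sum>k\<in>{N<..<n}. summand k)"
    by (simp add: sum_subtractf)
  moreover have "cyclo_divides n 2 (\<Sum>k\<le>N. summand k - bailey_summand k)"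
    by (intro cyclo_divides_sum cyclo_divides_summand_minus_bailey_summand) simp
  moreover have "cyclo_divides n 2 (\<Sum>k\<in>{N<..<n}. summand k)"
    by (intro cyclo_divides_sum cyclo_divides_summand_tail) simp_all
  ultimately show ?thesis
    using cyclo_divides_sum_bailey_summand by (simp add: cyclo_divides_add)
qed

end

theorem theorem6:
  fixes d n :: nat and r :: int
  assumes "d \<ge> 4" and "even d" and "gcd (int d) r = 1"
    and "n > 1" and "[int n = - r] (mod int d)" and "int n \<ge> max r (int d - r)"
  shows "fcong
     (\<Sum>k<n. qint (2 * int d * int k + r)
        * (qpoch (qv powi r) (qv powi int d) k) ^ d
        / (qpoch (qv powi int d) (qv powi int d) k) ^ d
        * qv powi (int d * (int d - r - 2) * int k div 2))
     0 ((cyclo n)\<^sup>2)"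
proof -
  interpret supercongruence d n r
    using assms by unfold_locales
  show ?thesis
    using fcong_if_cyclo_divides[OF cyclo_divides_sum_summand] unfolding summand_def .
qed

end
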